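(* Consider the following three multigraphs. (a) $H_a$ has vertices $p,q,r,s,t,z$ and edges: three parallel edges $v_1,v_2,v_3$ joining $p,q$; three parallel edges $x_1,x_2,x_3$ joining $q,r$; two parallel edges $u_1,u_2$ joining $p,s$; two parallel edges $y_1,y_2$ joining $r,t$; and one edge $w$ joining $q,z$. (b) $H_b=H_a-z$ (i.e., $H_a$ with the edge $w$ and vertex $z$ removed). (c) $H_c$ has vertices $p_0,p_1,p_2,p_3,p_4$ and edges: one edge $u$ joining $p_0,p_3$; three parallel edges $v_1,v_2,v_3$ joining $p_0,p_1$; two parallel edges $x_1,x_2$ joining $p_1,p_2$; one edge $y$ joining $p_2,p_4$; one edge $w$ joining $p_0,p_4$. Let $L(\cdot)$ denote the line graph and $d(\cdot)$ the degree in the respective line graph. Then $L(H_a)$ is $f$-KP with $f(e)=d(e)-1$ for all vertices $e$; $L(H_b)$ is $f$-KP with $f(e)=d(e)$ for $e\in\{v_1,v_2,v_3,x_1,x_2,x_3\}$ and $f(e)=d(e)-1$ for $e\in\{u_1,u_2,y_1,y_2\}$; and $L(H_c)$ is $f$-KP with $f(e)=d(e)-1$ for all vertices $e$.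
   Context: The line graph of a multigraph $H$ has vertex set $E(H)$, two vertices adjacent when the corresponding edges share an endpoint (in particular parallel edges are adjacent). A digraph (in which some edges may be oriented in both directions) is kernel-perfect if every induced subdigraph $D'$ has a kernel, i.e., a set $I\subseteq V(D')$ with no arc between two of its vertices such that every vertex of $D'$ not in $I$ has an out-neighbor in $I$. A graph $G$ is $f$-KP if some supergraph $G'$ of $G$ on the same vertex set (possibly with parallel edges; equivalently, an orientation of $G$ in which some edges may be oriented in both directions) has a kernel-perfect orientation with $d^+(v)<f(v)$ for all $v$. *)

theory Defs
  imports Main
begin

text \<open>A digraph on vertex set V is given by an arc predicate A (A x y means an arc x -> y).
  An edge oriented in both directions corresponds to A x y and A y x.\<close>

definition is_kernel :: "('a \<Rightarrow> 'a \<Rightarrow> bool) \<Rightarrow> 'a set \<Rightarrow> 'a set \<Rightarrow> bool" where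
  "is_kernel A S I \<longleftrightarrow> I \<subseteq> S \<and> (\<forall>x\<in>I. \<forall>y\<in>I. \<not> A x y) \<and> (\<forall>x\<in>S - I. \<exists>y\<in>I. A x y)"

definition kernel_perfect :: "'a set \<Rightarrow> ('a \<Rightarrow> 'a \<Rightarrow> bool) \<Rightarrow> bool" where
  "kernel_perfect V A \<longleftrightarrow> (\<forall>S. S \<subseteq> V \<longrightarrow> (\<exists>I. is_kernel A S I))"

definition outdeg :: "'a set \<Rightarrow> ('a \<Rightarrow> 'a \<Rightarrow> bool) \<Rightarrow> 'a \<Rightarrow> nat" where
  "outdeg V A v = card {u \<in> V. A v u}"

definition f_KP :: "'a set \<Rightarrow> ('a \<Rightarrow> 'a \<Rightarrow> bool) \<Rightarrow> ('a \<Rightarrow> nat) \<Rightarrow> bool" where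
  "f_KP V E f \<longleftrightarrow> (\<exists>A.
      (\<forall>u v. A u v \<longrightarrow> u \<in> V \<and> v \<in> V \<and> E u v) \<and>
      (\<forall>u\<in>V. \<forall>v\<in>V. E u v \<longrightarrow> A u v \<or> A v u) \<and>
      kernel_perfect V A \<and>
      (\<forall>v\<in>V. outdeg V A v < f v))"

text \<open>A multigraph is given by an edge set Ed and an endpoint map ends (each edge has a
  2-element set of ends; parallel edges are distinct edges with the same ends).\<close>
definition lg_adj :: "('e \<Rightarrow> 'v set) \<Rightarrow> 'e \<Rightarrow> 'e \<Rightarrow> bool" where
  "lg_adj ends e e' \<longleftrightarrow> e \<noteq> e' \<and> ends e \<inter> ends e' \<noteq> {}"

definition lg_deg :: "'e set \<Rightarrow> ('e \<Rightarrow> 'v set) \<Rightarrow> 'e \<Rightarrow> nat" where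
  "lg_deg Ed ends e = card {e' \<in> Ed. lg_adj ends e e'}"

datatype va = p | q | r | s | t | z
datatype ea = v1 | v2 | v3 | x1 | x2 | x3 | u1 | u2 | y1 | y2 | w

fun ends_a :: "ea \<Rightarrow> va set" where
  "ends_a v1 = {p, q}" | "ends_a v2 = {p, q}" | "ends_a v3 = {p, q}"
| "ends_a x1 = {q, r}" | "ends_a x2 = {q, r}" | "ends_a x3 = {q, r}"
| "ends_a u1 = {p, s}" | "ends_a u2 = {p, s}"
| "ends_a y1 = {r, t}" | "ends_a y2 = {r, t}"
| "ends_a w = {q, z}"

definition E_a :: "ea set" where "E_a = UNIV"
text \<open>H_b = H_a - z: delete vertex z and its only incident edge w.\<close>
definition E_b :: "ea set" where "E_b = UNIV - {w}"

datatype vc = p0 | p1 | p2 | p3 | p4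
datatype ec = cu | cv1 | cv2 | cv3 | cx1 | cx2 | cy | cw

fun ends_c :: "ec \<Rightarrow> vc set" where
  "ends_c cu = {p0, p3}"
| "ends_c cv1 = {p0, p1}" | "ends_c cv2 = {p0, p1}" | "ends_c cv3 = {p0, p1}"
| "ends_c cx1 = {p1, p2}" | "ends_c cx2 = {p1, p2}"
| "ends_c cy = {p2, p4}"
| "ends_c cw = {p0, p4}"

definition E_c :: "ec set" where "E_c = UNIV"

end

theory Submission
  imports Defs
begin

text \<open>In each case we exhibit an explicit orientation of the line graph, with some edges oriented
  both ways, whose out-degrees are below the prescribed bounds. Kernel-perfectness follows from
  Neumann-Lara's criterion: a finite digraph in which every nonempty induced subdigraph has a
  nonempty semikernel is kernel-perfect. The semikernels are taken from a short list of
  independent sets J; J is a semikernel of every S \<supseteq> J avoiding the out-neighbours of J that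
  have no arc back into J, and that every nonempty S contains such a J is a propositional
  tautology in the membership atoms of S.\<close>

definition semikernel :: "('a \<Rightarrow> 'a \<Rightarrow> bool) \<Rightarrow> 'a set \<Rightarrow> 'a set \<Rightarrow> bool" where
  "semikernel A S J \<longleftrightarrow> J \<subseteq> S \<and> (\<forall>x\<in>J. \<forall>y\<in>J. \<not> A x y)
     \<and> (\<forall>x\<in>J. \<forall>y\<in>S. A x y \<longrightarrow> (\<exists>z\<in>J. A y z))"

lemma is_kernel_Un_semikernel:
  assumes J: "semikernel A S J"
    and K: "is_kernel A (S - J - {y. \<exists>z\<in>J. A y z}) K"
  shows "is_kernel A S (J \<union> K)"
proof -
  let ?S' = "S - J - {y. \<exists>z\<in>J. A y z}"
  have K_sub: "K \<subseteq> ?S'" and K_indep: "\<forall>x\<in>K. \<forall>y\<in>K. \<not> A x y"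
    and K_absorbs: "\<forall>x\<in>?S' - K. \<exists>y\<in>K. A x y"
    using K unfolding is_kernel_def by auto
  have J_sub: "J \<subseteq> S" and J_indep: "\<forall>x\<in>J. \<forall>y\<in>J. \<not> A x y"
    and J_returns: "\<forall>x\<in>J. \<forall>y\<in>S. A x y \<longrightarrow> (\<exists>z\<in>J. A y z)"
    using J unfolding semikernel_def by auto
  \<comment> \<open>an out-neighbour of J in S has an arc back into J, so it is not left in S'\<close>
  have no_arc_J_to_K: "\<not> A x y" if "x \<in> J" "y \<in> K" for x y
    using that J_returns K_sub by blast
  have no_arc_K_to_J: "\<not> A y x" if "x \<in> J" "y \<in> K" for x y
    using that K_sub by blast
  show ?thesis
    unfolding is_kernel_def
    using J_sub K_sub J_indep K_indep K_absorbs no_arc_J_to_K no_arc_K_to_J by blast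
qed

theorem kernel_if_semikernels:
  assumes "finite S"
    and "\<And>T. T \<subseteq> S \<Longrightarrow> T \<noteq> {} \<Longrightarrow> \<exists>J. J \<noteq> {} \<and> semikernel A T J"
  shows "\<exists>I. is_kernel A S I"
  using assms
proof (induction "card S" arbitrary: S rule: less_induct)
  case less
  show ?case
  proof (cases "S = {}")
    case True
    then show ?thesis unfolding is_kernel_def by auto
  next
    case False
    then obtain J where "J \<noteq> {}" and J: "semikernel A S J"
      using less.prems(2) by blast
    define S' where "S' = S - J - {y. \<exists>z\<in>J. A y z}"
    have "S' \<subset> S"
      using \<open>J \<noteq> {}\<close> J unfolding S'_def semikernel_def by auto
    then have "finite S'" "card S' < card S"
      using less.prems(1) by (auto simp: psubset_card_mono finite_subset)
    moreover have "\<And>T. T \<subseteq> S' \<Longrightarrow> T \<noteq> {} \<Longrightarrow> \<exists>J. J \<noteq> {} \<and> semikernel A T J"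
      using less.prems(2) \<open>S' \<subset> S\<close> by (meson psubset_imp_subset subset_trans)
    ultimately obtain K where "is_kernel A S' K"
      using less.hyps by blast
    then show ?thesis
      using is_kernel_Un_semikernel[OF J] unfolding S'_def by blast
  qed
qed

corollary kernel_perfect_if_semikernels:
  assumes "finite V"
    and "\<And>T. T \<subseteq> V \<Longrightarrow> T \<noteq> {} \<Longrightarrow> \<exists>J. J \<noteq> {} \<and> semikernel A T J"
  shows "kernel_perfect V A"
  unfolding kernel_perfect_def
proof (intro allI impI)
  fix S assume "S \<subseteq> V"
  then show "\<exists>I. is_kernel A S I"
    using assms by (intro kernel_if_semikernels) (auto intro: finite_subset)
qed

definition unreturned :: "('a \<Rightarrow> 'a \<Rightarrow> bool) \<Rightarrow> 'a list \<Rightarrow> 'a set \<Rightarrow> 'a set" where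
  "unreturned A vs J = set (filter (\<lambda>y. (\<exists>x\<in>J. A x y) \<and> \<not> (\<exists>z\<in>J. A y z)) vs)"

lemma semikernel_if_avoids_unreturned:
  assumes "S \<subseteq> set vs" "J \<subseteq> S" "\<forall>x\<in>J. \<forall>y\<in>J. \<not> A x y" "S \<inter> unreturned A vs J = {}"
  shows "semikernel A S J"
  using assms unfolding semikernel_def unreturned_def by (auto 0 3)

lemma kernel_perfect_by_semikernel_list:
  assumes "\<forall>J\<in>set Js. J \<noteq> {} \<and> (\<forall>x\<in>J. \<forall>y\<in>J. \<not> A x y)"
    and "\<And>S. \<exists>v\<in>set vs. v \<in> S \<Longrightarrow> \<exists>J\<in>set Js. J \<subseteq> S \<and> S \<inter> unreturned A vs J = {}"
  shows "kernel_perfect (set vs) A"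
proof (rule kernel_perfect_if_semikernels)
  fix T assume "T \<subseteq> set vs" "T \<noteq> {}"
  then have "\<exists>v\<in>set vs. v \<in> T"
    by blast
  then obtain J where J: "J \<in> set Js" "J \<subseteq> T" "T \<inter> unreturned A vs J = {}"
    using assms(2) by blast
  with assms(1) have "J \<noteq> {}" "\<forall>x\<in>J. \<forall>y\<in>J. \<not> A x y"
    by auto
  with J \<open>T \<subseteq> set vs\<close> show "\<exists>J. J \<noteq> {} \<and> semikernel A T J"
    by (blast intro: semikernel_if_avoids_unreturned)
qed simp

definition out_arcs :: "('a \<Rightarrow> 'a list) \<Rightarrow> 'a \<Rightarrow> 'a \<Rightarrow> bool" where
  "out_arcs out x y \<longleftrightarrow> y \<in> set (out x)"

lemma f_KP_by_out_lists:
  assumes out_sub: "\<And>v. v \<in> set vs \<Longrightarrow> set (out v) \<subseteq> {u \<in> set vs. E v u}"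
    and out_outside: "\<And>v. v \<notin> set vs \<Longrightarrow> out v = []"
    and orients: "\<And>u v. u \<in> set vs \<Longrightarrow> v \<in> set vs \<Longrightarrow> E u v \<Longrightarrow> v \<in> set (out u) \<or> u \<in> set (out v)"
    and kp: "kernel_perfect (set vs) (out_arcs out)"
    and short: "\<And>v. v \<in> set vs \<Longrightarrow> length (out v) < f v"
  shows "f_KP (set vs) E f"
  unfolding f_KP_def
proof (intro exI[of _ "out_arcs out"] conjI)
  show "\<forall>u v. out_arcs out u v \<longrightarrow> u \<in> set vs \<and> v \<in> set vs \<and> E u v"
  proof (intro allI impI)
    fix u v assume arc: "out_arcs out u v"
    then have "u \<in> set vs"
      using out_outside unfolding out_arcs_def by force
    with arc show "u \<in> set vs \<and> v \<in> set vs \<and> E u v"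
      using out_sub unfolding out_arcs_def by blast
  qed
  show "\<forall>u\<in>set vs. \<forall>v\<in>set vs. E u v \<longrightarrow> out_arcs out u v \<or> out_arcs out v u"
    using orients unfolding out_arcs_def by blast
  show "\<forall>v\<in>set vs. outdeg (set vs) (out_arcs out) v < f v"
  proof
    fix v assume "v \<in> set vs"
    then have "{u \<in> set vs. out_arcs out v u} = set (out v)"
      using out_sub unfolding out_arcs_def by blast
    then have "outdeg (set vs) (out_arcs out) v \<le> length (out v)"
      unfolding outdeg_def by (simp add: card_length)
    also have "\<dots> < f v"
      using short \<open>v \<in> set vs\<close> .
    finally show "outdeg (set vs) (out_arcs out) v < f v" .
  qed
qed (fact kp)

lemma lg_deg_list:
  assumes "distinct vs"
  shows "lg_deg (set vs) ends e = length (filter (lg_adj ends e) vs)"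
  unfolding lg_deg_def using assms
  by (metis distinct_card distinct_filter set_filter)

definition edges_a :: "ea list" where "edges_a = [v1, v2, v3, x1, x2, x3, u1, u2, y1, y2, w]"

lemma set_edges_a: "set edges_a = UNIV"
  unfolding edges_a_def by (auto intro: ea.exhaust)

lemma distinct_edges_a: "distinct edges_a"
  by (simp add: edges_a_def)

fun out_La :: "ea \<Rightarrow> ea list" where
  "out_La v1 = [v2, v3, x3, u1, u2, w]"
| "out_La v2 = [v1, v3, x2, x3, u1, u2]"
| "out_La v3 = [v1, v2, x2, x3, w]"
| "out_La x1 = [v1, v2, v3, x2, x3, w]"
| "out_La x2 = [v1, x1, x3, y1, y2]"
| "out_La x3 = [v2, x1, x2, y1, y2, w]"
| "out_La u1 = [v1, v3]"
| "out_La u2 = [v3, u1]"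
| "out_La y1 = [x1, x2]"
| "out_La y2 = [x1, y1]"
| "out_La w = [v1, v2, x2, x3]"

definition semikernels_La :: "ea set list" where
  "semikernels_La = [{u1}, {y1}, {x3}, {y2}, {u2}, {v3, y1}, {v1}, {y1, w}, {v3, y2}, {x2},
     {u1, w}, {v2}, {y2, w}, {v3}, {u2, w}, {v1, y1}, {x1}, {x2, u1}, {x2, u2}, {v2, y2},
     {u1, y2, w}, {v2, y1}, {u1, y1, w}, {w}, {u2, y1, w}, {u2, y2, w}, {v1, y2}]"

lemma kernel_perfect_La: "kernel_perfect (set edges_a) (out_arcs out_La)"
proof (rule kernel_perfect_by_semikernel_list[of semikernels_La])
  show "\<forall>J\<in>set semikernels_La. J \<noteq> {} \<and> (\<forall>x\<in>J. \<forall>y\<in>J. \<not> out_arcs out_La x y)"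
    by (simp add: semikernels_La_def out_arcs_def)
next
  fix S :: "ea set" assume "\<exists>v\<in>set edges_a. v \<in> S"
  then show "\<exists>J\<in>set semikernels_La. J \<subseteq> S \<and> S \<inter> unreturned (out_arcs out_La) edges_a J = {}"
    by (simp add: semikernels_La_def unreturned_def out_arcs_def edges_a_def) sat
qed

lemma f_KP_La: "f_KP E_a (lg_adj ends_a) (\<lambda>e. lg_deg E_a ends_a e - 1)"
  unfolding E_a_def set_edges_a[symmetric] lg_deg_list[OF distinct_edges_a]
proof (rule f_KP_by_out_lists[OF _ _ _ kernel_perfect_La])
  show "out_La v = []" if "v \<notin> set edges_a" for v
    using that by (simp add: set_edges_a)
qed (auto simp: edges_a_def lg_adj_def)

definition edges_b :: "ea list" where "edges_b = [v1, v2, v3, x1, x2, x3, u1, u2, y1, y2]"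

lemma set_edges_b: "set edges_b = E_b"
  unfolding edges_b_def E_b_def by (auto intro: ea.exhaust)

lemma distinct_edges_b: "distinct edges_b"
  by (simp add: edges_b_def)

fun out_Lb :: "ea \<Rightarrow> ea list" where
  "out_Lb v1 = [v2, x2, x3, u1, u2]"
| "out_Lb v2 = [v1, v3, x2, x3, u1, u2]"
| "out_Lb v3 = [v1, x2, x3, u1, u2]"
| "out_Lb x1 = [v1, v2, v3, x2, x3, y1]"
| "out_Lb x2 = [v1, v3, x1, x3, y1, y2]"
| "out_Lb x3 = [x1, x2, y1, y2]"
| "out_Lb u1 = [v3, u2]"
| "out_Lb u2 = []"
| "out_Lb y1 = [x1, y2]"
| "out_Lb y2 = [x1, x2]"
| "out_Lb w = []"

definition semikernels_Lb :: "ea set list" where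
  "semikernels_Lb = [{u2}, {u1}, {v1}, {x2}, {y1}, {y2}, {x3}, {v1, y2}, {v3, y2}, {x1},
     {v2, y2}, {v3}, {v2}]"

lemma kernel_perfect_Lb: "kernel_perfect (set edges_b) (out_arcs out_Lb)"
proof (rule kernel_perfect_by_semikernel_list[of semikernels_Lb])
  show "\<forall>J\<in>set semikernels_Lb. J \<noteq> {} \<and> (\<forall>x\<in>J. \<forall>y\<in>J. \<not> out_arcs out_Lb x y)"
    by (simp add: semikernels_Lb_def out_arcs_def)
next
  fix S :: "ea set" assume "\<exists>v\<in>set edges_b. v \<in> S"
  then show "\<exists>J\<in>set semikernels_Lb. J \<subseteq> S \<and> S \<inter> unreturned (out_arcs out_Lb) edges_b J = {}"
    by (simp add: semikernels_Lb_def unreturned_def out_arcs_def edges_b_def) sat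
qed

lemma f_KP_Lb:
  "f_KP E_b (lg_adj ends_a)
     (\<lambda>e. if e \<in> {v1, v2, v3, x1, x2, x3} then lg_deg E_b ends_a e else lg_deg E_b ends_a e - 1)"
  unfolding set_edges_b[symmetric] lg_deg_list[OF distinct_edges_b]
proof (rule f_KP_by_out_lists[OF _ _ _ kernel_perfect_Lb])
  show "out_Lb v = []" if "v \<notin> set edges_b" for v
    using that by (simp add: set_edges_b E_b_def)
qed (auto simp: edges_b_def lg_adj_def)

definition edges_c :: "ec list" where "edges_c = [cu, cv1, cv2, cv3, cx1, cx2, cy, cw]"

lemma set_edges_c: "set edges_c = UNIV"
  unfolding edges_c_def by (auto intro: ec.exhaust)

lemma distinct_edges_c: "distinct edges_c"
  by (simp add: edges_c_def)

fun out_Lc :: "ec \<Rightarrow> ec list" where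
  "out_Lc cu = [cv1, cv3]"
| "out_Lc cv1 = [cv2, cx1, cx2]"
| "out_Lc cv2 = [cu, cv1, cv3, cw]"
| "out_Lc cv3 = [cv1, cv2, cx1, cx2]"
| "out_Lc cx1 = [cv2, cx2, cy]"
| "out_Lc cx2 = [cv2, cv3, cy]"
| "out_Lc cy = [cw]"
| "out_Lc cw = [cu, cv1, cv3]"

definition semikernels_Lc :: "ec set list" where
  "semikernels_Lc = [{cy}, {cx2}, {cv1, cy}, {cu}, {cv3}, {cv1}, {cx1}, {cw}, {cv2}, {cu, cx2},
     {cv3, cy}, {cu, cx1}, {cx2, cw}, {cx1, cw}]"

lemma kernel_perfect_Lc: "kernel_perfect (set edges_c) (out_arcs out_Lc)"
proof (rule kernel_perfect_by_semikernel_list[of semikernels_Lc])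
  show "\<forall>J\<in>set semikernels_Lc. J \<noteq> {} \<and> (\<forall>x\<in>J. \<forall>y\<in>J. \<not> out_arcs out_Lc x y)"
    by (simp add: semikernels_Lc_def out_arcs_def)
next
  fix S :: "ec set" assume "\<exists>v\<in>set edges_c. v \<in> S"
  then show "\<exists>J\<in>set semikernels_Lc. J \<subseteq> S \<and> S \<inter> unreturned (out_arcs out_Lc) edges_c J = {}"
    by (simp add: semikernels_Lc_def unreturned_def out_arcs_def edges_c_def) sat
qed

lemma f_KP_Lc: "f_KP E_c (lg_adj ends_c) (\<lambda>e. lg_deg E_c ends_c e - 1)"
  unfolding E_c_def set_edges_c[symmetric] lg_deg_list[OF distinct_edges_c]
proof (rule f_KP_by_out_lists[OF _ _ _ kernel_perfect_Lc])
  show "out_Lc v = []" if "v \<notin> set edges_c" for v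
    using that by (simp add: set_edges_c)
qed (auto simp: edges_c_def lg_adj_def)

theorem mainTheorem12:
  shows "f_KP E_a (lg_adj ends_a) (\<lambda>e. lg_deg E_a ends_a e - 1)
       \<and> f_KP E_b (lg_adj ends_a)
           (\<lambda>e. if e \<in> {v1, v2, v3, x1, x2, x3} then lg_deg E_b ends_a e
                else lg_deg E_b ends_a e - 1)
       \<and> f_KP E_c (lg_adj ends_c) (\<lambda>e. lg_deg E_c ends_c e - 1)"
  using f_KP_La f_KP_Lb f_KP_Lc by blast

end
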